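(* Let $0<c<1$ and let $(t_n)_{n\geq1}$ satisfy $1<t_n<2$ for all $n$. Put $a_n=c^{t_n^n}$ and $F_n(z,w)=(z^2+a_nw,\ a_nz)$. Let $\Omega=\{(z,w)\in\mathbb{C}^2:F_n\circ\cdots\circ F_1(z,w)\to0\}$, let $K\subseteq\Omega$ be compact, and set $\delta_n=\max\{|z_n|,|w_n|:(z,w)\in K\}$ where $(z_n,w_n)=F_n\circ\cdots\circ F_1(z,w)$. Suppose that for arbitrarily large $n$ there is an integer $k(n)\geq1$ with $t_{n+k(n)+1}\leq 2^{\frac{k(n)}{n+k(n)+1}}$. Then there exist arbitrarily large $n$ with $\delta_n\leq a_{n+1}$. *)

theory Defs
  imports "HOL-Analysis.Analysis"
begin

definition seq_a :: "real \<Rightarrow> (nat \<Rightarrow> real) \<Rightarrow> nat \<Rightarrow> real" where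
  "seq_a c t n = c powr (t n ^ n)"

definition mapF :: "real \<Rightarrow> (nat \<Rightarrow> real) \<Rightarrow> nat \<Rightarrow> complex \<times> complex \<Rightarrow> complex \<times> complex" where
  "mapF c t n p = ((fst p)^2 + complex_of_real (seq_a c t n) * snd p,
                   complex_of_real (seq_a c t n) * fst p)"

fun orbit :: "real \<Rightarrow> (nat \<Rightarrow> real) \<Rightarrow> nat \<Rightarrow> complex \<times> complex \<Rightarrow> complex \<times> complex" where
  "orbit c t 0 p = p"
| "orbit c t (Suc n) p = mapF c t (Suc n) (orbit c t n p)"

definition basin :: "real \<Rightarrow> (nat \<Rightarrow> real) \<Rightarrow> (complex \<times> complex) set" where
  "basin c t = {p. (\<lambda>n. orbit c t n p) \<longlonglongrightarrow> (0, 0)}"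

definition delta :: "real \<Rightarrow> (nat \<Rightarrow> real) \<Rightarrow> (complex \<times> complex) set \<Rightarrow> nat \<Rightarrow> real" where
  "delta c t K n = (SUP p\<in>K. max (cmod (fst (orbit c t n p))) (cmod (snd (orbit c t n p))))"

end

theory Submission
  imports Defs
begin

text \<open>
  Since \<open>a\<^sub>n \<le> c\<close>, the sup-norm \<open>m\<^sub>n\<close> of an orbit satisfies \<open>m\<^sub>n\<^sub>+\<^sub>1 \<le> m\<^sub>n (m\<^sub>n + c)\<close>, so once
  \<open>m\<^sub>n < 1 - c\<close> the orbit stays in that ball; by compactness of \<open>K\<close> this happens uniformly
  on \<open>K\<close> after some time. If \<open>\<delta>\<^sub>n > a\<^sub>n\<^sub>+\<^sub>1\<close> for all large \<open>n\<close>, then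
  \<open>\<delta>\<^sub>n\<^sub>+\<^sub>1 \<le> \<delta>\<^sub>n\<^sup>2 + a\<^sub>n\<^sub>+\<^sub>1 \<delta>\<^sub>n \<le> 2 \<delta>\<^sub>n\<^sup>2\<close>, and starting from \<open>\<delta>\<^sub>n \<le> c/2\<close> this gives
  \<open>\<delta>\<^sub>n\<^sub>+\<^sub>k < c\<^bsup>2^k\<^esup>\<close>. The hypothesis on \<open>t\<close> says exactly \<open>t\<^sub>n\<^sub>+\<^sub>k\<^sub>+\<^sub>1\<^bsup>n+k+1\<^esup> \<le> 2\<^sup>k\<close>, i.e.
  \<open>a\<^sub>n\<^sub>+\<^sub>k\<^sub>+\<^sub>1 \<ge> c\<^bsup>2^k\<^esup>\<close>, a contradiction.
\<close>

definition orbit_size :: "real \<Rightarrow> (nat \<Rightarrow> real) \<Rightarrow> nat \<Rightarrow> complex \<times> complex \<Rightarrow> real" where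
  "orbit_size c t n p = max (cmod (fst (orbit c t n p))) (cmod (snd (orbit c t n p)))"

lemma delta_eq_SUP_orbit_size: "delta c t K n = (SUP p\<in>K. orbit_size c t n p)"
  by (simp add: delta_def orbit_size_def)

lemma seq_a_nonneg: "0 \<le> seq_a c t n"
  by (simp add: seq_a_def)

lemma seq_a_le_base:
  assumes "0 < c" "c < 1" "1 < t n"
  shows "seq_a c t n \<le> c"
proof -
  have "1 \<le> t n ^ n" using assms by (simp add: one_le_power)
  then have "c powr (t n ^ n) \<le> c powr 1" using assms by (intro powr_mono') auto
  then show ?thesis using assms by (simp add: seq_a_def)
qed

lemma seq_a_ge_power:
  assumes "0 < c" "c < 1" "0 < t m" "m \<ge> 1" "t m \<le> 2 powr (real k / real m)"
  shows "c ^ (2 ^ k) \<le> seq_a c t m"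
proof -
  have "t m ^ m \<le> (2 powr (real k / real m)) ^ m"
    using assms by (intro power_mono) auto
  also have "\<dots> = 2 powr (real k / real m * real m)"
    by (simp add: powr_realpow[symmetric] powr_powr)
  also have "\<dots> = 2 ^ k" using assms by (simp add: powr_realpow)
  finally have "c powr (2 ^ k) \<le> c powr (t m ^ m)" using assms by (intro powr_mono') auto
  moreover have "c powr (2 ^ k) = c ^ (2 ^ k)" using assms
    by (metis of_nat_numeral of_nat_power powr_realpow)
  ultimately show ?thesis by (simp add: seq_a_def)
qed

lemma continuous_on_orbit: "continuous_on UNIV (orbit c t n)"
proof (induction n)
  case 0
  then show ?case by (simp add: continuous_on_id)
next
  case (Suc n)
  have "continuous_on UNIV (\<lambda>p. mapF c t (Suc n) (orbit c t n p))"
    unfolding mapF_def using Suc by (intro continuous_intros) auto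
  then show ?case by simp
qed

lemma continuous_on_orbit_size: "continuous_on UNIV (orbit_size c t n)"
  unfolding orbit_size_def[abs_def]
  using continuous_on_orbit[of c t n] by (intro continuous_intros) auto

lemma orbit_size_nonneg: "0 \<le> orbit_size c t n p"
  unfolding orbit_size_def by (simp add: le_max_iff_disj)

lemma orbit_size_le_norm: "orbit_size c t n p \<le> norm (orbit c t n p)"
proof -
  obtain z w where "orbit c t n p = (z, w)" by fastforce
  then show ?thesis using norm_fst_le[of z w] norm_snd_le[of w z] by (simp add: orbit_size_def)
qed

lemma orbit_size_Suc_le:
  "orbit_size c t (Suc n) p \<le> (orbit_size c t n p)\<^sup>2 + seq_a c t (Suc n) * orbit_size c t n p"
proof -
  define z w a m where "z = fst (orbit c t n p)" and "w = snd (orbit c t n p)"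
    and "a = seq_a c t (Suc n)" and "m = orbit_size c t n p"
  have a0: "0 \<le> a" unfolding a_def by (rule seq_a_nonneg)
  have zm: "cmod z \<le> m" and wm: "cmod w \<le> m"
    unfolding m_def orbit_size_def z_def w_def by auto
  have "cmod (z\<^sup>2 + complex_of_real a * w) \<le> (cmod z)\<^sup>2 + a * cmod w"
    using a0 by (metis abs_of_nonneg norm_mult norm_of_real norm_power norm_triangle_ineq)
  also have "\<dots> \<le> m\<^sup>2 + a * m"
    using zm wm a0 by (intro add_mono power_mono mult_left_mono) auto
  finally have "cmod (z\<^sup>2 + complex_of_real a * w) \<le> m\<^sup>2 + a * m" .
  moreover have "cmod (complex_of_real a * z) \<le> m\<^sup>2 + a * m"
    using zm a0 by (simp add: norm_mult mult_left_mono add_increasing)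
  ultimately show ?thesis unfolding z_def w_def a_def m_def
    by (simp add: orbit_size_def mapF_def)
qed

lemma orbit_size_stays_below:
  assumes "0 < c" "c < 1" "\<And>n. n \<ge> 1 \<Longrightarrow> 1 < t n"
    and "\<rho> \<le> 1 - c" "orbit_size c t n p < \<rho>" "n \<le> n'"
  shows "orbit_size c t n' p < \<rho>"
  using assms(6,5)
proof (induction n' rule: dec_induct)
  case base
  then show ?case .
next
  case (step j)
  define m where "m = orbit_size c t j p"
  have m0: "0 \<le> m" by (simp add: m_def orbit_size_nonneg)
  have "seq_a c t (Suc j) * m \<le> c * m"
    using seq_a_le_base[OF assms(1,2), of t "Suc j"] assms(3) m0 by (simp add: mult_right_mono)
  then have "orbit_size c t (Suc j) p \<le> m * (m + c)"
    using orbit_size_Suc_le[of c t j p] unfolding m_def by (simp add: power2_eq_square algebra_simps)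
  also have "\<dots> \<le> m"
    using mult_left_mono[of "m + c" 1 m] step assms(4) m0 unfolding m_def by simp
  finally show ?case using step unfolding m_def by simp
qed

lemma basin_uniformly_small:
  assumes "0 < c" "c < 1" "\<And>n. n \<ge> 1 \<Longrightarrow> 1 < t n"
    and "compact K" "K \<subseteq> basin c t" "0 < \<rho>" "\<rho> \<le> 1 - c"
  obtains M where "\<And>n p. n \<ge> M \<Longrightarrow> p \<in> K \<Longrightarrow> orbit_size c t n p < \<rho>"
proof -
  have "K \<subseteq> (\<Union>n. {p. orbit_size c t n p < \<rho>})"
  proof
    fix p assume "p \<in> K"
    then have "(\<lambda>n. orbit c t n p) \<longlonglongrightarrow> 0"
      using assms(5) by (auto simp: basin_def zero_prod_def)
    from LIMSEQ_D[OF this \<open>0 < \<rho>\<close>] obtain n where "norm (orbit c t n p) < \<rho>" by auto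
    then have "orbit_size c t n p < \<rho>"
      using orbit_size_le_norm[of c t n p] by linarith
    then show "p \<in> (\<Union>n. {p. orbit_size c t n p < \<rho>})" by blast
  qed
  moreover have "\<And>n. open {p. orbit_size c t n p < \<rho>}"
    by (rule open_Collect_less[OF continuous_on_orbit_size continuous_on_const])
  ultimately obtain C where C: "finite C" "K \<subseteq> (\<Union>n\<in>C. {p. orbit_size c t n p < \<rho>})"
    using compactE_image[OF assms(4)] by (metis (no_types, lifting))
  show ?thesis
  proof
    fix n p assume "Max (insert 0 C) \<le> n" "p \<in> K"
    then obtain j where "j \<in> C" "orbit_size c t j p < \<rho>" "j \<le> n"
      using C by fastforce
    then show "orbit_size c t n p < \<rho>"
      using orbit_size_stays_below[of c t \<rho> j p n] assms(1-3,7) by blast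
  qed
qed

lemma bdd_above_orbit_size:
  assumes "compact K"
  shows "bdd_above (orbit_size c t n ` K)"
  using assms continuous_on_subset[OF continuous_on_orbit_size]
  by (intro bounded_imp_bdd_above compact_imp_bounded compact_continuous_image) auto

lemma delta_le:
  assumes "K \<noteq> {}" "\<And>p. p \<in> K \<Longrightarrow> orbit_size c t n p \<le> b"
  shows "delta c t K n \<le> b"
  unfolding delta_eq_SUP_orbit_size using assms by (rule cSUP_least)

lemma delta_Suc_le_twice_square:
  assumes "compact K" "K \<noteq> {}" "seq_a c t (Suc n) < delta c t K n"
  shows "delta c t K (Suc n) \<le> 2 * (delta c t K n)\<^sup>2"
proof (rule delta_le[OF assms(2)])
  fix p assume "p \<in> K"
  define d m where "d = delta c t K n" and "m = orbit_size c t n p"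
  have "m \<le> d" unfolding d_def m_def delta_eq_SUP_orbit_size
    using \<open>p \<in> K\<close> bdd_above_orbit_size[OF assms(1)] by (rule cSUP_upper)
  moreover have "0 \<le> m" unfolding m_def by (rule orbit_size_nonneg)
  moreover note seq_a_nonneg[of c t "Suc n"] assms(3)
  ultimately have "m\<^sup>2 + seq_a c t (Suc n) * m \<le> d * d + d * d"
    unfolding d_def[symmetric] power2_eq_square by (intro add_mono mult_mono) auto
  then show "orbit_size c t (Suc n) p \<le> 2 * d\<^sup>2"
    using orbit_size_Suc_le[of c t n p] unfolding m_def by (simp add: power2_eq_square)
qed

lemma delta_doubly_exponential_decay:
  assumes "compact K" "K \<noteq> {}" "0 \<le> c" "delta c t K n \<le> c / 2"
    and "\<And>i. i < k \<Longrightarrow> seq_a c t (Suc (n + i)) < delta c t K (n + i)"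
  shows "delta c t K (n + k) \<le> c ^ (2 ^ k) / 2"
  using assms(5)
proof (induction k)
  case 0
  then show ?case using assms(4) by simp
next
  case (Suc k)
  define d where "d = delta c t K (n + k)"
  have "d \<le> c ^ (2 ^ k) / 2" using Suc by (simp add: d_def)
  moreover have "0 \<le> d"
    using Suc.prems[of k] seq_a_nonneg[of c t "Suc (n + k)"] by (simp add: d_def)
  ultimately have "2 * d\<^sup>2 \<le> 2 * (c ^ (2 ^ k) / 2)\<^sup>2"
    by (simp add: power_mono)
  also have "\<dots> = c ^ (2 ^ Suc k) / 2"
    by (simp add: power_mult power2_eq_square power_mult_distrib mult.commute)
  finally show ?case
    using delta_Suc_le_twice_square[OF assms(1,2) Suc.prems[of k]] by (simp add: d_def)
qed

theorem lemma4p2: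
  fixes c :: real and t :: "nat \<Rightarrow> real" and K :: "(complex \<times> complex) set"
  assumes "0 < c" "c < 1"
    and "\<And>n. n \<ge> 1 \<Longrightarrow> 1 < t n \<and> t n < 2"
    and "compact K" "K \<noteq> {}" "K \<subseteq> basin c t"
    and "\<forall>N. \<exists>n\<ge>N. \<exists>k::nat. k \<ge> 1 \<and>
            t (n + k + 1) \<le> 2 powr (real k / real (n + k + 1))"
  shows "\<forall>N. \<exists>n\<ge>N. delta c t K n \<le> seq_a c t (n + 1)"
proof (rule ccontr)
  assume "\<not> ?thesis"
  then obtain N where N: "\<And>n. n \<ge> N \<Longrightarrow> seq_a c t (Suc n) < delta c t K n"
    by (auto simp: not_le) (meson not_le)
  have t_gt_1: "\<And>n. n \<ge> 1 \<Longrightarrow> 1 < t n" using assms(3) by blast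
  obtain M where M: "\<And>n p. n \<ge> M \<Longrightarrow> p \<in> K \<Longrightarrow> orbit_size c t n p < min (c / 2) (1 - c)"
    using basin_uniformly_small[OF assms(1,2) t_gt_1 assms(4,6), of "min (c / 2) (1 - c)"] assms(1,2)
    by auto
  obtain n k where nk: "n \<ge> max N M" "k \<ge> 1"
      "t (n + k + 1) \<le> 2 powr (real k / real (n + k + 1))"
    using assms(7) by blast
  have "delta c t K n \<le> c / 2"
    using M[of n] nk(1) by (intro delta_le[OF assms(5)]) (auto intro: less_imp_le)
  then have "delta c t K (n + k) \<le> c ^ (2 ^ k) / 2"
    using N nk(1) assms(1) by (intro delta_doubly_exponential_decay[OF assms(4,5)]) auto
  moreover have "c ^ (2 ^ k) \<le> seq_a c t (n + k + 1)"
    using assms(1,2) t_gt_1[of "n + k + 1"] nk(3) by (intro seq_a_ge_power) auto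
  moreover have "seq_a c t (Suc (n + k)) < delta c t K (n + k)" using N nk(1) by simp
  moreover have "0 < c ^ (2 ^ k)" using assms(1) by simp
  ultimately show False by simp
qed

end
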